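(* Let $\Omega\subset\mathbb R^d$ be a bounded Borel set, $f:\Omega\to[0,\infty)$ bounded with $\int_\Omega f=1$, $p\ge1$, $x_1,x_2\in\Omega$, and $h_1,h_2:[0,1]\to[0,\infty)$ non-decreasing and Lipschitz continuous. For $\rho\in(0,1)$ and any Borel $\psi_0:\Omega\to[0,1]$, define recursively for $j\ge0$: $m_j=\int_\Omega(1-\psi_j)f\,dx$, $t_{j+1}=h_2(1-m_j)-h_1(m_j)$, and $$\psi_{j+1}(x)=\begin{cases}\rho\,\psi_j(x)&\text{if }\tau(x)<t_{j+1},\\ 1-\rho(1-\psi_j(x))&\text{otherwise.}\end{cases}$$ Then there exists $\bar\rho\in(0,1)$ (depending only on $\Omega,f,p,x_1,x_2,h_1,h_2$) such that, for every $\rho\in(\bar\rho,1)$ and every $\psi_0$, $\psi_j\to\bar\psi$ uniformly on every compact subset of $\Omega\setminus\{\tau=\bar t\}$.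
   Context: $\tau(x)=|x-x_1|^p-|x-x_2|^p$, $m(t)=\int_{\{x\in\Omega:\tau(x)<t\}}f\,dx$, $G(t)=h_2(1-m(t))-h_1(m(t))$. There is a unique $\bar t\in\mathbb R$ with $G(\bar t)=\bar t$, and $\bar\psi(x)=0$ if $\tau(x)<\bar t$, $\bar\psi(x)=1$ if $\tau(x)>\bar t$ (this encodes the unique equilibrium $A_1=\{\tau<\bar t\}$, $A_2=\{\tau>\bar t\}$). $\psi_j(x)\in[0,1]$ is the fraction of citizens at $x$ going to $x_2$ on day $j$. *)

theory Defs
  imports "HOL-Analysis.Analysis"
begin

definition tau :: "real \<Rightarrow> 'a::euclidean_space \<Rightarrow> 'a \<Rightarrow> 'a \<Rightarrow> real" where
  "tau p x1 x2 x = norm (x - x1) powr p - norm (x - x2) powr p"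

definition mfun :: "'a::euclidean_space set \<Rightarrow> ('a \<Rightarrow> real) \<Rightarrow> real \<Rightarrow> 'a \<Rightarrow> 'a \<Rightarrow> real \<Rightarrow> real" where
  "mfun \<Omega> f p x1 x2 t = integral {x \<in> \<Omega>. tau p x1 x2 x < t} f"

definition Gfun :: "'a::euclidean_space set \<Rightarrow> ('a \<Rightarrow> real) \<Rightarrow> real \<Rightarrow> 'a \<Rightarrow> 'a
    \<Rightarrow> (real \<Rightarrow> real) \<Rightarrow> (real \<Rightarrow> real) \<Rightarrow> real \<Rightarrow> real" where
  "Gfun \<Omega> f p x1 x2 h1 h2 t = h2 (1 - mfun \<Omega> f p x1 x2 t) - h1 (mfun \<Omega> f p x1 x2 t)"

definition tbar :: "'a::euclidean_space set \<Rightarrow> ('a \<Rightarrow> real) \<Rightarrow> real \<Rightarrow> 'a \<Rightarrow> 'a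
    \<Rightarrow> (real \<Rightarrow> real) \<Rightarrow> (real \<Rightarrow> real) \<Rightarrow> real" where
  "tbar \<Omega> f p x1 x2 h1 h2 = (THE t. Gfun \<Omega> f p x1 x2 h1 h2 t = t)"

text \<open>psi-bar: 0 where tau < t-bar, 1 where tau > t-bar (value on {tau = t-bar} irrelevant;
  we set it to 1).\<close>
definition psibar :: "'a::euclidean_space set \<Rightarrow> ('a \<Rightarrow> real) \<Rightarrow> real \<Rightarrow> 'a \<Rightarrow> 'a
    \<Rightarrow> (real \<Rightarrow> real) \<Rightarrow> (real \<Rightarrow> real) \<Rightarrow> 'a \<Rightarrow> real" where
  "psibar \<Omega> f p x1 x2 h1 h2 x =
     (if tau p x1 x2 x < tbar \<Omega> f p x1 x2 h1 h2 then 0 else 1)"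

fun psi_seq :: "'a::euclidean_space set \<Rightarrow> ('a \<Rightarrow> real) \<Rightarrow> real \<Rightarrow> 'a \<Rightarrow> 'a
    \<Rightarrow> (real \<Rightarrow> real) \<Rightarrow> (real \<Rightarrow> real) \<Rightarrow> real \<Rightarrow> ('a \<Rightarrow> real) \<Rightarrow> nat \<Rightarrow> 'a \<Rightarrow> real" where
  "psi_seq \<Omega> f p x1 x2 h1 h2 \<rho> \<psi>0 0 = \<psi>0"
| "psi_seq \<Omega> f p x1 x2 h1 h2 \<rho> \<psi>0 (Suc j) =
     (let \<psi> = psi_seq \<Omega> f p x1 x2 h1 h2 \<rho> \<psi>0 j;
          m = integral \<Omega> (\<lambda>x. (1 - \<psi> x) * f x);
          t = h2 (1 - m) - h1 m
      in (\<lambda>x. if tau p x1 x2 x < t then \<rho> * \<psi> x else 1 - \<rho> * (1 - \<psi> x)))"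

end

theory Submission
  imports Defs
begin

text \<open>
  Write \<open>m\<^sub>j\<close> for the mass going to \<open>x\<^sub>1\<close> on day \<open>j\<close> and \<open>H m = h\<^sub>2 (1 - m) - h\<^sub>1 m\<close>, so that
  \<open>t\<^sub>j\<^sub>+\<^sub>1 = H m\<^sub>j\<close> with \<open>H\<close> antitone and Lipschitz. Integrating the update rule gives the relaxation
  \<open>m\<^sub>j\<^sub>+\<^sub>1 = \<rho> m\<^sub>j + (1 - \<rho>) M (H m\<^sub>j)\<close>, where \<open>M = mfun\<close> is nondecreasing and the equilibrium
  mass is \<open>M tbar\<close>. The key estimate is that \<open>M\<close> is Lipschitz from the left at \<open>tbar\<close>: near that
  level \<open>tau\<close> increases at a uniform rate along \<open>x\<^sub>2 - x\<^sub>1\<close>, so about \<open>1/\<delta>\<close> disjoint translates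
  of the slab \<open>{tbar - \<delta> \<le> tau < tbar}\<close> fit into a fixed ball and the slab has measure
  \<open>O(\<delta>)\<close>. For \<open>\<rho>\<close> close to \<open>1\<close> the error \<open>m\<^sub>j - M tbar\<close> therefore contracts by \<open>\<rho>\<close> once it is
  nonnegative, and otherwise shrinks at least as fast, so \<open>m\<^sub>j \<rightarrow> M tbar\<close> and \<open>t\<^sub>j \<rightarrow> tbar\<close>. On a
  compact set avoiding \<open>{tau = tbar}\<close> every \<open>tau x\<close> eventually stays on one side of all thresholds,
  after which \<open>\<psi>\<^sub>j x\<close> approaches \<open>0\<close> or \<open>1\<close> geometrically with ratio \<open>\<rho>\<close>.
\<close>

section \<open>Relaxation dynamics\<close>

lemma relaxation_tendsto:
  fixes m F :: "nat \<Rightarrow> real"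
  assumes rec: "\<And>j. m (Suc j) = \<rho> * m j + (1 - \<rho>) * F j"
    and below: "\<And>j. m j \<le> a \<Longrightarrow> a \<le> F j"
    and above: "\<And>j. a \<le> m j \<Longrightarrow> F j \<le> a \<and> a - F j \<le> \<Lambda> * (m j - a)"
    and \<rho>: "0 < \<rho>" "\<rho> < 1" "(1 - \<rho>) * \<Lambda> \<le> \<rho>"
  shows "m \<longlonglongrightarrow> a"
proof -
  define e where "e j = m j - a" for j
  have e_Suc: "e (Suc j) = \<rho> * e j + (1 - \<rho>) * (F j - a)" for j
    unfolding e_def rec by (simp add: algebra_simps)
  have contract: "0 \<le> e (Suc j) \<and> e (Suc j) \<le> \<rho> * e j" if "0 \<le> e j" for j
  proof -
    have F: "F j \<le> a" "a - F j \<le> \<Lambda> * e j" using above[of j] that by (auto simp: e_def)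
    have "(1 - \<rho>) * (a - F j) \<le> ((1 - \<rho>) * \<Lambda>) * e j"
      using F \<rho> by (simp add: mult.assoc mult_left_mono)
    also have "\<dots> \<le> \<rho> * e j" using \<rho> that by (intro mult_right_mono)
    finally have "(1 - \<rho>) * (a - F j) \<le> \<rho> * e j" .
    moreover have "0 \<le> (1 - \<rho>) * (a - F j)" using F \<rho> by simp
    ultimately show ?thesis unfolding e_Suc by (simp add: algebra_simps)
  qed
  have grow: "\<rho> * e j \<le> e (Suc j)" if "e j < 0" for j
    using below[of j] that \<rho> unfolding e_Suc by (simp add: e_def)
  have "(\<lambda>i. \<bar>c\<bar> * \<rho> ^ i) \<longlonglongrightarrow> 0" for c
    using \<rho> by (intro tendsto_mult_right_zero LIMSEQ_realpow_zero) auto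
  then have "e \<longlonglongrightarrow> 0"
  proof (cases "\<exists>k. 0 \<le> e k")
    case True
    then obtain k where "0 \<le> e k" by blast
    have "0 \<le> e (i + k) \<and> e (i + k) \<le> \<bar>e k\<bar> * \<rho> ^ i" for i
    proof (induction i)
      case (Suc i)
      then have "0 \<le> e (Suc (i + k)) \<and> e (Suc (i + k)) \<le> \<rho> * e (i + k)" using contract by blast
      moreover have "\<rho> * e (i + k) \<le> \<rho> * (\<bar>e k\<bar> * \<rho> ^ i)" using Suc \<rho> by (intro mult_left_mono) auto
      ultimately show ?case by (simp add: algebra_simps)
    qed (use \<open>0 \<le> e k\<close> in simp)
    then have "(\<lambda>i. e (i + k)) \<longlonglongrightarrow> 0"
      by (intro Lim_null_comparison[OF _ \<open>(\<lambda>i. \<bar>e k\<bar> * \<rho> ^ i) \<longlonglongrightarrow> 0\<close>]) auto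
    then show ?thesis by (rule LIMSEQ_offset)
  next
    case False
    then have neg: "e i < 0" for i by (meson not_le)
    have "- e i \<le> \<bar>e 0\<bar> * \<rho> ^ i" for i
    proof (induction i)
      case (Suc i)
      have "- e (Suc i) \<le> \<rho> * - e i" using grow[OF neg] by simp
      also have "\<dots> \<le> \<rho> * (\<bar>e 0\<bar> * \<rho> ^ i)" using Suc \<rho> by (intro mult_left_mono) auto
      finally show ?case by (simp add: algebra_simps)
    qed simp
    then show ?thesis
      by (intro Lim_null_comparison[OF _ \<open>(\<lambda>i. \<bar>e 0\<bar> * \<rho> ^ i) \<longlonglongrightarrow> 0\<close>])
        (use neg in \<open>auto simp: abs_if\<close>)
  qed
  then show ?thesis unfolding e_def by (simp add: LIM_zero_iff)
qed

lemma relaxation_feedback_tendsto: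
  fixes m :: "nat \<Rightarrow> real" and M H :: "real \<Rightarrow> real"
  assumes rec: "\<And>j. m (Suc j) = \<rho> * m j + (1 - \<rho>) * M (H (m j))"
    and m: "\<And>j. m j \<in> {0..1}" and M: "mono M" "M T \<in> {0..1}"
    and H: "antimono_on {0..1} H" "L-lipschitz_on {0..1} H" "H (M T) = T"
    and left: "M T < 1 \<Longrightarrow> \<forall>t<T. M T - M t \<le> \<Lambda> * (T - t)" and "0 \<le> \<Lambda>"
    and \<rho>: "0 < \<rho>" "\<rho> < 1" "(1 - \<rho>) * (\<Lambda> * L) \<le> \<rho>"
  shows "m \<longlonglongrightarrow> M T" "(\<lambda>j. H (m j)) \<longlonglongrightarrow> T"
proof -
  have H_le: "H b \<le> H a" if "a \<le> b" "a \<in> {0..1}" "b \<in> {0..1}" for a b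
    using H(1) that by (simp add: monotone_on_def)
  have H_dist: "\<bar>H a - T\<bar> \<le> L * \<bar>a - M T\<bar>" if "a \<in> {0..1}" for a
    using lipschitz_onD[OF H(2) that M(2)] H(3) by (simp add: dist_real_def)
  show "m \<longlonglongrightarrow> M T"
  proof (rule relaxation_tendsto[where F = "\<lambda>j. M (H (m j))" and \<Lambda> = "\<Lambda> * L", OF rec _ _ \<rho>])
    fix j assume "m j \<le> M T"
    then have "T \<le> H (m j)" using H_le[OF _ m M(2)] H(3) by simp
    then show "M T \<le> M (H (m j))" by (rule monoD[OF M(1)])
  next
    fix j assume above: "M T \<le> m j"
    then have "H (m j) \<le> T" using H_le[OF _ M(2) m] H(3) by simp
    moreover have "M T - M (H (m j)) \<le> \<Lambda> * L * (m j - M T)"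
    proof (cases "H (m j) < T")
      case True
      then have "M T < 1" using above m[of j] H(3) by (cases "m j = M T") auto
      then have "M T - M (H (m j)) \<le> \<Lambda> * (T - H (m j))" using left True by blast
      also have "\<dots> \<le> \<Lambda> * (L * (m j - M T))"
        using H_dist[OF m, of j] above \<open>0 \<le> \<Lambda>\<close> by (intro mult_left_mono) auto
      finally show ?thesis by (simp add: mult.assoc)
    next
      case False
      then show ?thesis
        using \<open>H (m j) \<le> T\<close> above \<open>0 \<le> \<Lambda>\<close> lipschitz_on_nonneg[OF H(2)] by simp
    qed
    ultimately show "M (H (m j)) \<le> M T \<and> M T - M (H (m j)) \<le> \<Lambda> * L * (m j - M T)"
      using monoD[OF M(1) \<open>H (m j) \<le> T\<close>] by blast
  qed
  then have lim: "(\<lambda>j. L * \<bar>m j - M T\<bar>) \<longlonglongrightarrow> 0"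
    using tendsto_mult_right_zero[OF tendsto_rabs_zero[OF LIM_zero]] by blast
  have "\<forall>j. norm (H (m j) - T) \<le> L * \<bar>m j - M T\<bar>"
    using H_dist m by (simp only: real_norm_def) blast
  from Lim_null_comparison[OF always_eventually[OF this] lim]
  have "(\<lambda>j. H (m j) - T) \<longlonglongrightarrow> 0" .
  then show "(\<lambda>j. H (m j)) \<longlonglongrightarrow> T" by (simp add: LIM_zero_iff)
qed

lemma exists_relaxation_threshold:
  fixes \<kappa> :: real
  assumes "0 \<le> \<kappa>"
  obtains \<rho>bar where "\<rho>bar \<in> {0<..<1}" "\<And>\<rho>. \<rho> \<in> {\<rho>bar<..<1} \<Longrightarrow> (1 - \<rho>) * \<kappa> \<le> \<rho>"
proof
  show "max (1 / 2) (\<kappa> / (1 + \<kappa>)) \<in> {0<..<1}" using assms by auto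
  show "(1 - \<rho>) * \<kappa> \<le> \<rho>" if "\<rho> \<in> {max (1 / 2) (\<kappa> / (1 + \<kappa>))<..<1}" for \<rho>
    using that assms by (auto simp: field_simps)
qed

lemma threshold_iteration_uniform_limit:
  fixes \<psi> :: "nat \<Rightarrow> 'a::metric_space \<Rightarrow> real" and g :: "'a \<Rightarrow> real"
  assumes step: "\<And>j x. x \<in> K \<Longrightarrow>
      \<psi> (Suc j) x = (if g x < t j then \<rho> * \<psi> j x else 1 - \<rho> * (1 - \<psi> j x))"
    and range: "\<And>j x. x \<in> K \<Longrightarrow> \<psi> j x \<in> {0..1}"
    and \<rho>: "0 < \<rho>" "\<rho> < 1"
    and t: "t \<longlonglongrightarrow> T" and K: "compact K" "continuous_on K g" "\<forall>x\<in>K. g x \<noteq> T"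
  shows "uniform_limit K \<psi> (\<lambda>x. if g x < T then 0 else 1) sequentially"
proof -
  define \<phi> where "\<phi> x = (if g x < T then 0 else 1 :: real)" for x
  have "compact (g ` K)" "T \<notin> g ` K" using K by (auto intro: compact_continuous_image)
  then obtain \<delta> where \<delta>: "\<delta> > 0" "\<forall>y \<in> g ` K. \<delta> \<le> dist T y"
    using separate_point_closed[OF compact_imp_closed] by blast
  obtain J where J: "\<And>j. j \<ge> J \<Longrightarrow> norm (t j - T) < \<delta>"
    using LIMSEQ_D[OF t \<delta>(1)] by blast
  have side: "g x < t j \<longleftrightarrow> g x < T" if "x \<in> K" "j \<ge> J" for x j
    using J[OF that(2)] \<delta>(2) that(1) by (auto simp: dist_real_def)
  have geometric: "\<bar>\<psi> (J + i) x - \<phi> x\<bar> \<le> \<rho> ^ i" if "x \<in> K" for x i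
  proof (induction i)
    case 0
    show ?case using range[OF that] by (auto simp: \<phi>_def)
  next
    case (Suc i)
    have "\<bar>\<psi> (Suc (J + i)) x - \<phi> x\<bar> = \<rho> * \<bar>\<psi> (J + i) x - \<phi> x\<bar>"
      using \<rho> side[OF that, of "J + i"] unfolding step[OF that] \<phi>_def
      by (auto simp: abs_mult right_diff_distrib[symmetric])
    also have "\<dots> \<le> \<rho> * \<rho> ^ i" using Suc \<rho> by (intro mult_left_mono) auto
    finally show ?case by simp
  qed
  show ?thesis unfolding \<phi>_def[symmetric]
  proof (rule uniform_limitI)
    fix e :: real assume "e > 0"
    then obtain k where k: "\<rho> ^ k < e" using real_arch_pow_inv[OF \<open>e > 0\<close> \<rho>(2)] by blast
    show "\<forall>\<^sub>F n in sequentially. \<forall>x\<in>K. dist (\<psi> n x) (\<phi> x) < e"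
    proof (rule eventually_sequentiallyI[of "J + k"], intro ballI)
      fix n x assume "J + k \<le> n" "x \<in> K"
      define i where "i = n - J"
      have i: "n = J + i" "k \<le> i" using \<open>J + k \<le> n\<close> by (auto simp: i_def)
      have "\<bar>\<psi> n x - \<phi> x\<bar> \<le> \<rho> ^ i" unfolding i(1) using \<open>x \<in> K\<close> by (rule geometric)
      also have "\<dots> \<le> \<rho> ^ k" using i \<rho> by (intro power_decreasing) auto
      finally show "dist (\<psi> n x) (\<phi> x) < e" using k by (simp add: dist_real_def)
    qed
  qed
qed

section \<open>Slabs of a function that increases along a direction\<close>

lemma increment_ge_of_deriv_ge:
  fixes g g' :: "real \<Rightarrow> real"
  assumes "a \<le> b" "finite E" "continuous_on {a..b} g"
    and deriv: "\<And>t. t \<in> {a<..<b} - E \<Longrightarrow> (g has_real_derivative g' t) (at t) \<and> c \<le> g' t"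
  shows "c * (b - a) \<le> g b - g a"
proof -
  define g'' where "g'' t = (if t \<in> {a<..<b} - E then g' t else c)" for t
  have ftc: "(g'' has_integral (g b - g a)) {a..b}"
    using assms(1-3) deriv
    by (intro fundamental_theorem_of_calculus_interior_strong)
      (auto simp: g''_def has_real_derivative_iff_has_vector_derivative)
  have const: "((\<lambda>t. c) has_integral c * (b - a)) {a..b}"
    using has_integral_const_real[of c a b] assms(1) by (simp add: mult.commute)
  show ?thesis
    by (rule has_integral_le[OF const ftc]) (use deriv in \<open>auto simp: g''_def\<close>)
qed

lemma measure_le_of_disjoint_translates:
  fixes S B :: "'a::euclidean_space set"
  assumes S: "S \<in> lmeasurable" and B: "B \<in> lmeasurable"
    and disj: "disjoint_family_on (\<lambda>k. (+) (real k *\<^sub>R v) ` S) {..<N}"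
    and sub: "(\<Union>k<N. (+) (real k *\<^sub>R v) ` S) \<subseteq> B"
  shows "real N * measure lebesgue S \<le> measure lebesgue B"
proof -
  have translates: "(+) (real k *\<^sub>R v) ` S \<in> lmeasurable" for k
    using measurable_translation[OF S] .
  have "real N * measure lebesgue S = (\<Sum>k<N. measure lebesgue ((+) (real k *\<^sub>R v) ` S))"
    by (simp add: measure_translation)
  also have "\<dots> = measure lebesgue (\<Union>k<N. (+) (real k *\<^sub>R v) ` S)"
  proof (rule measure_finite_Union[symmetric])
    show "emeasure lebesgue ((+) (real k *\<^sub>R v) ` S) \<noteq> \<infinity>" for k
      using fmeasurableD2[OF translates] by simp
  qed (use translates disj in \<open>auto intro: fmeasurableD\<close>)
  also have "\<dots> \<le> measure lebesgue B"
    using translates sub B by (intro measure_mono_fmeasurable) (auto intro!: sets.finite_UN)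
  finally show ?thesis .
qed

definition crosses_level :: "('a::real_vector \<Rightarrow> real) \<Rightarrow> 'a \<Rightarrow> 'a set \<Rightarrow> real \<Rightarrow> bool" where
  "crosses_level g u S T \<longleftrightarrow> (\<exists>c>0. \<exists>\<eta>>0. \<forall>y\<in>S. \<forall>s.
     T - \<eta> \<le> s \<longrightarrow> s \<le> g y \<longrightarrow> g y < T \<longrightarrow> T \<le> g (y + ((T - s) / c) *\<^sub>R u))"

lemma crosses_levelI:
  assumes "c > 0" "\<eta> > 0"
    and "\<And>y s. y \<in> S \<Longrightarrow> T - \<eta> \<le> s \<Longrightarrow> s \<le> g y \<Longrightarrow> g y < T \<Longrightarrow> T \<le> g (y + ((T - s) / c) *\<^sub>R u)"
  shows "crosses_level g u S T"
  using assms unfolding crosses_level_def by blast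

lemma crosses_level_vacuous:
  assumes "\<eta> > 0" "\<And>y. y \<in> S \<Longrightarrow> T - \<eta> \<le> g y \<Longrightarrow> T \<le> g y"
  shows "crosses_level g u S T"
proof (rule crosses_levelI[of 1 \<eta>])
  fix y s assume "y \<in> S" "T - \<eta> \<le> s" "s \<le> g y" "g y < T"
  then show "T \<le> g (y + ((T - s) / 1) *\<^sub>R u)" using assms(2)[of y] by linarith
qed (use assms in auto)

lemma slab_measure_le_of_crosses_level:
  fixes g :: "'a::euclidean_space \<Rightarrow> real"
  assumes cross: "crosses_level g u S T"
    and mono: "\<And>y v. 0 \<le> v \<Longrightarrow> g y \<le> g (y + v *\<^sub>R u)"
    and g: "g \<in> borel_measurable borel" and S: "bounded S" "S \<in> sets lebesgue"
  shows "\<exists>C \<eta>. \<eta> > 0 \<and> (\<forall>s. T - \<eta> \<le> s \<longrightarrow> s < T \<longrightarrow>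
           measure lebesgue {x\<in>S. s \<le> g x \<and> g x < T} \<le> C * (T - s))"
proof -
  obtain c \<eta>0 where c: "c > 0" "\<eta>0 > 0" and climb: "\<And>y s. y \<in> S \<Longrightarrow> T - \<eta>0 \<le> s \<Longrightarrow> s \<le> g y
      \<Longrightarrow> g y < T \<Longrightarrow> T \<le> g (y + ((T - s) / c) *\<^sub>R u)"
    using cross unfolding crosses_level_def by blast
  obtain R where R: "\<And>x. x \<in> S \<Longrightarrow> norm x \<le> R" using S(1) by (auto simp: bounded_iff)
  define B where "B = cball (0::'a) (R + norm u)"
  show ?thesis
  proof (intro exI conjI allI impI)
    show "min \<eta>0 c > 0" using c by simp
    fix s assume s: "T - min \<eta>0 c \<le> s" "s < T"
    define A where "A = {x\<in>S. s \<le> g x \<and> g x < T}"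
    define h where "h = (T - s) / c"
    have h: "0 < h" "h \<le> 1" using s c by (auto simp: h_def field_simps)
    have "{x. s \<le> g x \<and> g x < T} \<in> sets borel" using g by measurable
    then have "S \<inter> {x. s \<le> g x \<and> g x < T} \<in> sets lebesgue" using S(2) by auto
    moreover have "A = S \<inter> {x. s \<le> g x \<and> g x < T}" by (auto simp: A_def)
    ultimately have "A \<in> lmeasurable"
      using S(1) by (intro bounded_set_imp_lmeasurable) (auto simp: A_def intro: bounded_subset)
    define N where "N = nat \<lceil>1 / h\<rceil>"
    have "real N = of_int \<lceil>1 / h\<rceil>" using h by (simp add: N_def)
    then have N: "1 / h \<le> real N" "real N < 1 / h + 1" by linarith+
    have far: "T \<le> g (x + (real k * h) *\<^sub>R u)" if "x \<in> A" "k \<ge> 1" for x k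
    proof -
      have "T \<le> g (x + h *\<^sub>R u)" using climb[of x s] that s by (auto simp: A_def h_def)
      also have "\<dots> \<le> g ((x + h *\<^sub>R u) + ((real k - 1) * h) *\<^sub>R u)" using that h by (intro mono) auto
      finally show ?thesis by (simp add: algebra_simps)
    qed
    have "(+) (real i *\<^sub>R (h *\<^sub>R u)) ` A \<inter> (+) (real j *\<^sub>R (h *\<^sub>R u)) ` A = {}"
      if "i < j" for i j
    proof (rule ccontr)
      assume "(+) (real i *\<^sub>R (h *\<^sub>R u)) ` A \<inter> (+) (real j *\<^sub>R (h *\<^sub>R u)) ` A \<noteq> {}"
      then obtain x x' where x: "x \<in> A" "x' \<in> A"
        and eq: "real i *\<^sub>R h *\<^sub>R u + x = real j *\<^sub>R h *\<^sub>R u + x'" by auto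
      then have "x = x' + (real (j - i) * h) *\<^sub>R u"
        using that by (simp add: algebra_simps of_nat_diff)
      then have "T \<le> g x" using far[OF x(2), of "j - i"] that by simp
      then show False using x(1) by (simp add: A_def)
    qed
    then have disj: "disjoint_family_on (\<lambda>k. (+) (real k *\<^sub>R (h *\<^sub>R u)) ` A) {..<N}"
      unfolding disjoint_family_on_def by (metis Int_commute linorder_neqE_nat)
    have sub: "(\<Union>k<N. (+) (real k *\<^sub>R (h *\<^sub>R u)) ` A) \<subseteq> B"
    proof clarify
      fix k x assume "k < N" "x \<in> A"
      have "(real k + 1) * h \<le> real N * h" using \<open>k < N\<close> h by (intro mult_right_mono) auto
      then have "real k * h \<le> 1" using N(2) h by (simp add: field_simps)
      then have "real k * h * norm u \<le> norm u" using h by (intro mult_left_le_one_le) auto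
      moreover have "norm x \<le> R" using R \<open>x \<in> A\<close> by (simp add: A_def)
      ultimately have "norm (real k *\<^sub>R h *\<^sub>R u + x) \<le> norm u + R"
        using h norm_triangle_ineq[of "(real k * h) *\<^sub>R u" x] by simp
      then show "real k *\<^sub>R h *\<^sub>R u + x \<in> B" by (simp add: B_def add.commute)
    qed
    have packing: "real N * measure lebesgue A \<le> measure lebesgue B"
      using measure_le_of_disjoint_translates[OF \<open>A \<in> lmeasurable\<close> _ disj sub] by (simp add: B_def)
    have "measure lebesgue A = (1 / h * measure lebesgue A) * h" using h by simp
    also have "\<dots> \<le> (real N * measure lebesgue A) * h"
      using N h by (intro mult_right_mono) auto
    also have "\<dots> \<le> measure lebesgue B * h" using packing h by simp
    finally have "measure lebesgue A \<le> measure lebesgue B * h" .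
    then show "measure lebesgue A \<le> measure lebesgue B / c * (T - s)"
      by (simp add: h_def)
  qed
qed

section \<open>Geometry of \<open>tau\<close>\<close>

lemma continuous_on_tau: "0 < p \<Longrightarrow> continuous_on A (tau p x1 x2)"
  unfolding tau_def[abs_def] by (intro continuous_intros continuous_on_powr') auto

lemma borel_measurable_tau: "0 < p \<Longrightarrow> tau p x1 x2 \<in> borel_measurable borel"
  by (intro borel_measurable_continuous_onI continuous_on_tau)

lemma tau_p1: "tau 1 x1 x2 z = norm (z - x1) - norm (z - x2)"
  unfolding tau_def by simp

lemma tau_p1_bounds: "\<bar>tau 1 x1 x2 z\<bar> \<le> norm (x2 - x1)"
  unfolding tau_p1 by (metis norm_minus_commute norm_triangle_ineq3 diff_diff_eq2 diff_add_cancel)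

lemma powr_minus_two_mult_self: "(a::real) \<ge> 0 \<Longrightarrow> a powr (p - 2) * a = a powr (p - 1)"
  using powr_add[of a "p - 2" 1] by (cases "a = 0") auto

lemma has_real_derivative_norm_powr_line:
  fixes w u :: "'a::euclidean_space"
  assumes "w + t *\<^sub>R u \<noteq> 0"
  shows "((\<lambda>t. norm (w + t *\<^sub>R u) powr p) has_real_derivative
           p * (norm (w + t *\<^sub>R u) powr (p - 2) * ((w + t *\<^sub>R u) \<bullet> u))) (at t)"
proof -
  let ?z = "w + t *\<^sub>R u"
  have "((\<lambda>t. norm (w + t *\<^sub>R u)) has_derivative (\<lambda>h. (h *\<^sub>R u) \<bullet> sgn ?z)) (at t)"
    by (rule has_derivative_compose[of "\<lambda>t. w + t *\<^sub>R u" "\<lambda>h. h *\<^sub>R u", OF _ has_derivative_norm[OF assms],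
          unfolded o_def]) (auto intro!: derivative_eq_intros)
  moreover have "(\<lambda>h. (h *\<^sub>R u) \<bullet> sgn ?z) = (*) (sgn ?z \<bullet> u)"
    by (auto simp: inner_commute)
  ultimately have "((\<lambda>t. norm (w + t *\<^sub>R u)) has_real_derivative sgn ?z \<bullet> u) (at t)"
    by (simp add: has_field_derivative_def)
  from DERIV_fun_powr[OF this, of p] assms
  have "((\<lambda>t. norm (w + t *\<^sub>R u) powr p) has_real_derivative
          p * norm ?z powr (p - 1) * (sgn ?z \<bullet> u)) (at t)" by simp
  moreover have "p * norm ?z powr (p - 1) * (sgn ?z \<bullet> u) = p * (norm ?z powr (p - 2) * (?z \<bullet> u))"
  proof -
    have "norm ?z * (sgn ?z \<bullet> u) = ?z \<bullet> u"
      using assms by (simp add: sgn_div_norm inner_scaleR_left del: scaleR_right_distrib)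
    then show ?thesis
      unfolding powr_minus_two_mult_self[of "norm ?z" p, OF norm_ge_zero, symmetric]
      by (simp add: mult.assoc)
  qed
  ultimately show ?thesis by simp
qed

definition tau_slope :: "real \<Rightarrow> 'a::euclidean_space \<Rightarrow> 'a \<Rightarrow> 'a \<Rightarrow> real" where
  "tau_slope p x1 x2 z = norm (z - x1) powr (p - 2) * ((z - x1) \<bullet> (x2 - x1))
                       - norm (z - x2) powr (p - 2) * ((z - x2) \<bullet> (x2 - x1))"

lemma has_real_derivative_tau_line:
  fixes y x1 x2 :: "'a::euclidean_space"
  assumes "y + t *\<^sub>R (x2 - x1) \<noteq> x1" "y + t *\<^sub>R (x2 - x1) \<noteq> x2"
  shows "((\<lambda>t. tau p x1 x2 (y + t *\<^sub>R (x2 - x1))) has_real_derivative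
           p * tau_slope p x1 x2 (y + t *\<^sub>R (x2 - x1))) (at t)"
proof -
  have shift: "y + t *\<^sub>R (x2 - x1) - x = (y - x) + t *\<^sub>R (x2 - x1)" for x t
    by (simp add: algebra_simps)
  show ?thesis
    unfolding tau_def tau_slope_def shift right_diff_distrib
    using assms by (intro DERIV_diff has_real_derivative_norm_powr_line) (auto simp: algebra_simps)
qed

lemma powr_diff_mult_diff_nonneg:
  fixes a b q :: real
  assumes "0 \<le> a" "0 \<le> b" "0 \<le> q"
  shows "0 \<le> (a powr q - b powr q) * (a - b)"
proof (cases "a \<le> b")
  case True
  then have "a powr q \<le> b powr q" using assms by (intro powr_mono2) auto
  with True show ?thesis by (simp add: mult_nonpos_nonpos)
next
  case False
  then have "b powr q \<le> a powr q" using assms by (intro powr_mono2) auto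
  with False show ?thesis by (simp add: mult_nonneg_nonneg)
qed

lemma powr_diff_mult_diff_pos:
  fixes a b q :: real
  assumes "0 \<le> a" "0 \<le> b" "0 < q" "a \<noteq> b"
  shows "0 < (a powr q - b powr q) * (a - b)"
proof (cases "a < b")
  case True
  then have "a powr q < b powr q" using assms by (intro powr_less_mono2) auto
  with True show ?thesis by (simp add: mult_neg_neg)
next
  case False
  then have "b < a" using assms(4) by simp
  then have "b powr q < a powr q" using assms by (intro powr_less_mono2) auto
  with \<open>b < a\<close> show ?thesis by (simp add: mult_pos_pos)
qed

lemma tau_slope_eq:
  fixes z x1 x2 :: "'a::euclidean_space"
  defines "\<alpha> \<equiv> norm (z - x1)" and "\<beta> \<equiv> norm (z - x2)" and "\<gamma> \<equiv> (z - x1) \<bullet> (z - x2)"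
  shows "tau_slope p x1 x2 z = (\<alpha> powr (p - 1) - \<beta> powr (p - 1)) * (\<alpha> - \<beta>)
                              + (\<alpha> * \<beta> - \<gamma>) * (\<alpha> powr (p - 2) + \<beta> powr (p - 2))"
proof -
  have u: "x2 - x1 = (z - x1) - (z - x2)" by simp
  have sq: "\<alpha> * \<alpha> = (z - x1) \<bullet> (z - x1)" "\<beta> * \<beta> = (z - x2) \<bullet> (z - x2)"
    by (simp_all add: \<alpha>_def \<beta>_def flip: power2_eq_square add: power2_norm_eq_inner)
  have "(z - x1) \<bullet> (x2 - x1) = \<alpha> * \<alpha> - \<gamma>" "(z - x2) \<bullet> (x2 - x1) = \<gamma> - \<beta> * \<beta>"
    unfolding u sq \<gamma>_def by (simp_all add: inner_diff_right inner_commute)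
  then have "tau_slope p x1 x2 z = \<alpha> powr (p - 2) * (\<alpha> * \<alpha> - \<gamma>) - \<beta> powr (p - 2) * (\<gamma> - \<beta> * \<beta>)"
    unfolding tau_slope_def \<alpha>_def \<beta>_def by simp
  also have "\<dots> = (\<alpha> powr (p - 1) - \<beta> powr (p - 1)) * (\<alpha> - \<beta>)
                     + (\<alpha> * \<beta> - \<gamma>) * (\<alpha> powr (p - 2) + \<beta> powr (p - 2))"
    using powr_minus_two_mult_self[of \<alpha> p] powr_minus_two_mult_self[of \<beta> p]
    by (simp add: \<alpha>_def \<beta>_def algebra_simps)
  finally show ?thesis .
qed

lemma norm_diff_sq_eq:
  fixes a b :: "'a::real_inner"
  shows "(norm (a - b))\<^sup>2 = (norm a - norm b)\<^sup>2 + 2 * (norm a * norm b - a \<bullet> b)"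
proof -
  have "(norm (a - b))\<^sup>2 = (norm a)\<^sup>2 + (norm b)\<^sup>2 - 2 * (a \<bullet> b)"
    by (simp add: power2_norm_eq_inner inner_diff_left inner_diff_right inner_commute)
  then show ?thesis by (simp add: power2_diff)
qed

lemma tau_slope_nonneg:
  assumes "p \<ge> 1"
  shows "0 \<le> tau_slope p x1 x2 z"
  using powr_diff_mult_diff_nonneg[of "norm (z - x1)" "norm (z - x2)" "p - 1"] assms
    norm_cauchy_schwarz[of "z - x1" "z - x2"]
  unfolding tau_slope_eq by (simp add: add_nonneg_nonneg)

lemma tau_slope_pos:
  assumes "x1 \<noteq> x2"
    and p: "p > 1 \<or> (p = 1 \<and> z \<noteq> x1 \<and> z \<noteq> x2 \<and> \<bar>tau 1 x1 x2 z\<bar> \<noteq> norm (x2 - x1))"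
  shows "0 < tau_slope p x1 x2 z"
proof -
  define \<alpha> \<beta> \<gamma> where "\<alpha> = norm (z - x1)" and "\<beta> = norm (z - x2)" and "\<gamma> = (z - x1) \<bullet> (z - x2)"
  have "\<gamma> \<le> \<alpha> * \<beta>" unfolding \<alpha>_def \<beta>_def \<gamma>_def by (rule norm_cauchy_schwarz)
  have first: "0 \<le> (\<alpha> powr (p - 1) - \<beta> powr (p - 1)) * (\<alpha> - \<beta>)"
    using p by (intro powr_diff_mult_diff_nonneg) (auto simp: \<alpha>_def \<beta>_def)
  have second: "0 \<le> (\<alpha> * \<beta> - \<gamma>) * (\<alpha> powr (p - 2) + \<beta> powr (p - 2))"
    using \<open>\<gamma> \<le> \<alpha> * \<beta>\<close> by simp
  show ?thesis
  proof (cases "\<gamma> < \<alpha> * \<beta>")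
    case True
    then have "\<alpha> \<noteq> 0 \<or> \<beta> \<noteq> 0" by (auto simp: \<alpha>_def \<gamma>_def)
    then have "0 < \<alpha> powr (p - 2) + \<beta> powr (p - 2)"
      by (auto simp: powr_gt_zero intro: add_pos_nonneg add_nonneg_pos)
    then show ?thesis using True first unfolding tau_slope_eq \<alpha>_def \<beta>_def \<gamma>_def
      by (smt (verit) mult_pos_pos)
  next
    case False
    then have "(norm (x2 - x1))\<^sup>2 = \<bar>\<alpha> - \<beta>\<bar>\<^sup>2"
      using \<open>\<gamma> \<le> \<alpha> * \<beta>\<close> norm_diff_sq_eq[of "z - x1" "z - x2"] by (simp add: \<alpha>_def \<beta>_def \<gamma>_def)
    then have "norm (x2 - x1) = \<bar>\<alpha> - \<beta>\<bar>"
      using power2_eq_iff_nonneg[OF norm_ge_zero abs_ge_zero, of "x2 - x1" "\<alpha> - \<beta>"] by simp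
    then have "\<alpha> \<noteq> \<beta>" "p > 1" using assms(1) p by (auto simp: tau_p1 \<alpha>_def \<beta>_def)
    then show ?thesis using second powr_diff_mult_diff_pos[of \<alpha> \<beta> "p - 1"]
      unfolding tau_slope_eq \<alpha>_def \<beta>_def \<gamma>_def by (simp add: \<alpha>_def \<beta>_def)
  qed
qed

lemma continuous_norm_powr_mult_inner:
  fixes c u :: "'a::euclidean_space"
  assumes "p > 1"
  shows "continuous_on S (\<lambda>z. norm (z - c) powr (p - 2) * ((z - c) \<bullet> u))"
proof -
  have at_c: "isCont (\<lambda>z. norm (z - c) powr (p - 2) * ((z - c) \<bullet> u)) c"
  proof -
    have bound: "norm (norm (z - c) powr (p - 2) * ((z - c) \<bullet> u)) \<le> norm (z - c) powr (p - 1) * norm u" for z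
    proof -
      have "norm (norm (z - c) powr (p - 2) * ((z - c) \<bullet> u))
            \<le> norm (z - c) powr (p - 2) * (norm (z - c) * norm u)"
        unfolding real_norm_def abs_mult abs_of_nonneg[OF powr_ge_zero]
        by (intro mult_left_mono Cauchy_Schwarz_ineq2) auto
      also have "\<dots> = norm (z - c) powr (p - 1) * norm u"
        by (simp only: mult.assoc[symmetric] powr_minus_two_mult_self[OF norm_ge_zero])
      finally show ?thesis .
    qed
    have "((\<lambda>z. norm (z - c) powr (p - 1) * norm u) \<longlongrightarrow> 0 powr (p - 1) * norm u) (at c)"
      using assms by (intro tendsto_intros tendsto_powr') (auto intro!: tendsto_eq_intros)
    then have "((\<lambda>z. norm (z - c) powr (p - 1) * norm u) \<longlongrightarrow> 0) (at c)"
      using assms by simp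
    then have "((\<lambda>z. norm (z - c) powr (p - 2) * ((z - c) \<bullet> u)) \<longlongrightarrow> 0) (at c)"
      by (rule Lim_null_comparison[OF always_eventually, rotated]) (use bound in auto)
    then show ?thesis by (simp add: isCont_def)
  qed
  have "isCont (\<lambda>z. norm (z - c) powr (p - 2) * ((z - c) \<bullet> u)) z" for z
    using at_c by (cases "z = c") (auto intro!: continuous_intros)
  then show ?thesis by (simp add: continuous_at_imp_continuous_on)
qed

lemma continuous_on_tau_slope:
  assumes "p > 1 \<or> (\<forall>z\<in>S. z \<noteq> x1 \<and> z \<noteq> x2)"
  shows "continuous_on S (tau_slope p x1 x2)"
  using assms unfolding tau_slope_def[abs_def]
proof (elim disjE)
  assume "p > 1"
  then show "continuous_on S (\<lambda>z. norm (z - x1) powr (p - 2) * ((z - x1) \<bullet> (x2 - x1))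
      - norm (z - x2) powr (p - 2) * ((z - x2) \<bullet> (x2 - x1)))"
    by (intro continuous_on_diff continuous_norm_powr_mult_inner)
qed (auto intro!: continuous_intros continuous_on_powr')

lemma finite_line_hits:
  fixes y c u :: "'a::real_inner"
  assumes "u \<noteq> 0"
  shows "finite {t. y + t *\<^sub>R u = c}"
proof (rule finite_subset)
  show "{t. y + t *\<^sub>R u = c} \<subseteq> {((c - y) \<bullet> u) / (u \<bullet> u)}"
  proof
    fix t assume "t \<in> {t. y + t *\<^sub>R u = c}"
    then have "(c - y) \<bullet> u = t * (u \<bullet> u)" by (auto simp: algebra_simps)
    then show "t \<in> {((c - y) \<bullet> u) / (u \<bullet> u)}" using assms by simp
  qed
qed simp

lemma tau_line_increment_ge:
  fixes y x1 x2 :: "'a::euclidean_space"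
  assumes "x1 \<noteq> x2" "0 \<le> h" "0 < p"
    and slope: "\<And>t. 0 < t \<Longrightarrow> t < h \<Longrightarrow> y + t *\<^sub>R (x2 - x1) \<notin> {x1, x2}
                  \<Longrightarrow> c \<le> p * tau_slope p x1 x2 (y + t *\<^sub>R (x2 - x1))"
  shows "c * h \<le> tau p x1 x2 (y + h *\<^sub>R (x2 - x1)) - tau p x1 x2 y"
proof -
  let ?E = "{t. y + t *\<^sub>R (x2 - x1) = x1} \<union> {t. y + t *\<^sub>R (x2 - x1) = x2}"
  have "c * (h - 0) \<le> tau p x1 x2 (y + h *\<^sub>R (x2 - x1)) - tau p x1 x2 (y + 0 *\<^sub>R (x2 - x1))"
  proof (rule increment_ge_of_deriv_ge[where E = ?E])
    show "finite ?E" using assms(1) by (simp add: finite_line_hits)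
    show "continuous_on {0..h} (\<lambda>t. tau p x1 x2 (y + t *\<^sub>R (x2 - x1)))"
      using assms(3) by (intro continuous_on_compose2[OF continuous_on_tau[of p UNIV]] continuous_intros) auto
    fix t assume "t \<in> {0<..<h} - ?E"
    then show "((\<lambda>t. tau p x1 x2 (y + t *\<^sub>R (x2 - x1))) has_real_derivative
        p * tau_slope p x1 x2 (y + t *\<^sub>R (x2 - x1))) (at t) \<and> c \<le> p * tau_slope p x1 x2 (y + t *\<^sub>R (x2 - x1))"
      using slope by (auto intro: has_real_derivative_tau_line)
  qed fact
  then show ?thesis by simp
qed

lemma tau_line_mono:
  fixes y x1 x2 :: "'a::euclidean_space"
  assumes "p \<ge> 1" "0 \<le> v"
  shows "tau p x1 x2 y \<le> tau p x1 x2 (y + v *\<^sub>R (x2 - x1))"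
proof (cases "x1 = x2")
  case False
  have "0 * v \<le> tau p x1 x2 (y + v *\<^sub>R (x2 - x1)) - tau p x1 x2 y"
  proof (rule tau_line_increment_ge[OF False assms(2)])
    show "0 < p" using assms(1) by simp
    show "0 \<le> p * tau_slope p x1 x2 (y + t *\<^sub>R (x2 - x1))" for t
      using assms(1) by (intro mult_nonneg_nonneg tau_slope_nonneg) auto
  qed
  then show ?thesis by simp
qed simp

lemma tau_crosses_level_of_slope_ge:
  fixes \<Omega> :: "'a::euclidean_space set"
  assumes "x1 \<noteq> x2" "p \<ge> 1" "\<epsilon> > 0" "c > 0" and R: "\<And>y. y \<in> \<Omega> \<Longrightarrow> norm y \<le> R"
    and slope: "\<And>z. norm z \<le> R + norm (x2 - x1) \<Longrightarrow> T - \<epsilon> \<le> tau p x1 x2 z \<Longrightarrow> tau p x1 x2 z < T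
                  \<Longrightarrow> c \<le> p * tau_slope p x1 x2 z"
  shows "crosses_level (tau p x1 x2) (x2 - x1) \<Omega> T"
proof (rule crosses_levelI[OF \<open>c > 0\<close>, of "min \<epsilon> c"])
  show "min \<epsilon> c > 0" using assms(3,4) by simp
  fix y s assume y: "y \<in> \<Omega>" and s: "T - min \<epsilon> c \<le> s" "s \<le> tau p x1 x2 y" "tau p x1 x2 y < T"
  define h where "h = (T - s) / c"
  have h: "0 < h" "h \<le> 1" "c * h = T - s" using s \<open>c > 0\<close> by (auto simp: h_def field_simps)
  show "T \<le> tau p x1 x2 (y + ((T - s) / c) *\<^sub>R (x2 - x1))"
  proof (rule ccontr)
    assume "\<not> ?thesis"
    then have below: "tau p x1 x2 (y + h *\<^sub>R (x2 - x1)) < T" by (simp add: h_def)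
    have "c * h \<le> tau p x1 x2 (y + h *\<^sub>R (x2 - x1)) - tau p x1 x2 y"
    proof (rule tau_line_increment_ge[OF assms(1)])
      fix t assume t: "0 < t" "t < h"
      let ?z = "y + t *\<^sub>R (x2 - x1)"
      have "tau p x1 x2 y \<le> tau p x1 x2 ?z" using t assms(2) by (intro tau_line_mono) auto
      then have "T - \<epsilon> \<le> tau p x1 x2 ?z" using s(1,2) min.cobounded1[of \<epsilon> c] by linarith
      moreover have "tau p x1 x2 ?z \<le> tau p x1 x2 (?z + (h - t) *\<^sub>R (x2 - x1))"
        using t assms(2) by (intro tau_line_mono) auto
      then have "tau p x1 x2 ?z < T" using below by (simp add: algebra_simps)
      moreover have "t * norm (x2 - x1) \<le> norm (x2 - x1)"
        using t h by (intro mult_left_le_one_le) auto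
      then have "norm ?z \<le> R + norm (x2 - x1)"
        using norm_triangle_ineq[of y "t *\<^sub>R (x2 - x1)"] R[OF y] t by simp
      ultimately show "c \<le> p * tau_slope p x1 x2 ?z" by (intro slope)
    qed (use h assms(2) in auto)
    then show False using h below s by simp
  qed
qed

lemma tau_crosses_level_of_slope_pos:
  fixes \<Omega> :: "'a::euclidean_space set"
  assumes "x1 \<noteq> x2" "p \<ge> 1" "\<epsilon> > 0" and R: "\<And>y. y \<in> \<Omega> \<Longrightarrow> norm y \<le> R"
    and pos: "\<And>z. norm z \<le> R + norm (x2 - x1) \<Longrightarrow> T - \<epsilon> \<le> tau p x1 x2 z \<Longrightarrow> tau p x1 x2 z \<le> T \<Longrightarrow>
       p > 1 \<or> (p = 1 \<and> z \<noteq> x1 \<and> z \<noteq> x2 \<and> \<bar>tau 1 x1 x2 z\<bar> \<noteq> norm (x2 - x1))"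
  shows "crosses_level (tau p x1 x2) (x2 - x1) \<Omega> T"
proof -
  define Z where "Z = cball 0 (R + norm (x2 - x1)) \<inter> {z. T - \<epsilon> \<le> tau p x1 x2 z \<and> tau p x1 x2 z \<le> T}"
  have p: "0 < p" using assms(2) by simp
  have Z: "compact Z" unfolding Z_def
    by (intro compact_Int_closed compact_cball closed_Collect_conj closed_Collect_le
        continuous_on_tau[OF p] continuous_intros)
  have "p > 1 \<or> (\<forall>z\<in>Z. z \<noteq> x1 \<and> z \<noteq> x2)"
    using pos unfolding Z_def by force
  then have "compact (tau_slope p x1 x2 ` Z)"
    by (intro compact_continuous_image[OF continuous_on_tau_slope Z])
  moreover have slope_pos: "0 < tau_slope p x1 x2 z" if "z \<in> Z" for z
    using that pos[of z] tau_slope_pos[OF assms(1)] by (auto simp: Z_def)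
  then have "0 \<notin> tau_slope p x1 x2 ` Z" by fastforce
  ultimately obtain \<kappa> where \<kappa>: "\<kappa> > 0" "\<forall>v \<in> tau_slope p x1 x2 ` Z. \<kappa> \<le> dist 0 v"
    using separate_point_closed[OF compact_imp_closed] by blast
  show ?thesis
  proof (rule tau_crosses_level_of_slope_ge[OF assms(1-3) _ R])
    show "0 < p * \<kappa>" using \<kappa>(1) p by simp
    fix z assume "norm z \<le> R + norm (x2 - x1)" "T - \<epsilon> \<le> tau p x1 x2 z" "tau p x1 x2 z < T"
    then have "z \<in> Z" by (simp add: Z_def)
    then have "\<kappa> \<le> tau_slope p x1 x2 z"
      using \<kappa>(2) \<open>z \<in> Z\<close> slope_pos[OF \<open>z \<in> Z\<close>] by (auto simp: dist_real_def)
    then show "p * \<kappa> \<le> p * tau_slope p x1 x2 z" using p by simp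
  qed
qed

lemma tau_crosses_level_dim1:
  fixes x1 x2 :: "'a::euclidean_space"
  assumes "DIM('a) = 1" "x1 \<noteq> x2"
  shows "crosses_level (tau 1 x1 x2) (x2 - x1) \<Omega> (norm (x2 - x1))"
proof -
  define u where "u = x2 - x1"
  define D where "D = norm u"
  have D: "D > 0" using assms(2) by (simp add: D_def u_def)
  have tau_line: "tau 1 x1 x2 (x2 + w *\<^sub>R u) = (\<bar>w + 1\<bar> - \<bar>w\<bar>) * D" for w
  proof -
    have "x2 + w *\<^sub>R u - x1 = (w + 1) *\<^sub>R u" by (simp add: u_def algebra_simps)
    then have "tau 1 x1 x2 (x2 + w *\<^sub>R u) = norm ((w + 1) *\<^sub>R u) - norm (w *\<^sub>R u)"
      by (simp add: tau_p1)
    also have "\<dots> = (\<bar>w + 1\<bar> - \<bar>w\<bar>) * D" by (simp add: D_def u_def left_diff_distrib)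
    finally show ?thesis .
  qed
  have "span {u} = UNIV"
    using assms by (intro dim_eq_full[THEN iffD1]) (simp add: u_def)
  have line: "\<exists>v. y = x2 + v *\<^sub>R u" for y
  proof -
    have "y - x2 \<in> span {u}" using \<open>span {u} = UNIV\<close> by simp
    then obtain v where "y - x2 = v *\<^sub>R u" by (auto simp: span_singleton)
    then show ?thesis by (auto simp: algebra_simps)
  qed
  show ?thesis unfolding u_def[symmetric] unfolding D_def[symmetric]
  proof (rule crosses_levelI[of "2 * D" D])
    fix y s assume s: "D - D \<le> s" "s \<le> tau 1 x1 x2 y" "tau 1 x1 x2 y < D"
    obtain v where y: "y = x2 + v *\<^sub>R u" using line by blast
    have "s \<le> (\<bar>v + 1\<bar> - \<bar>v\<bar>) * D" "(\<bar>v + 1\<bar> - \<bar>v\<bar>) * D < D"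
      using s unfolding y tau_line by simp_all
    then have "0 \<le> 2 * (v * D) + D - s"
      using s(1) D mult_nonneg_nonneg[of v D]
      by (cases "v \<ge> 0"; cases "v \<ge> -1") (simp_all add: algebra_simps)
    then have "0 \<le> v + (D - s) / (2 * D)" using D by (simp add: field_simps)
    moreover have "y + ((D - s) / (2 * D)) *\<^sub>R u = x2 + (v + (D - s) / (2 * D)) *\<^sub>R u"
      by (simp add: y algebra_simps)
    ultimately show "D \<le> tau 1 x1 x2 (y + ((D - s) / (2 * D)) *\<^sub>R u)" by (simp add: tau_line)
  qed (use D in auto)
qed

text \<open>For \<open>p = 1\<close> and \<open>T = |x\<^sub>2 - x\<^sub>1|\<close> in dimension at least two the level set is the ray beyond
  \<open>x\<^sub>2\<close>, whose neighbourhood slabs are cusps; that level is excluded here and handled by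
  \<open>mfun_eq_one_at_top\<close> instead.\<close>

lemma tau_crosses_level:
  fixes \<Omega> :: "'a::euclidean_space set"
  assumes "x1 \<noteq> x2" "p \<ge> 1" "bounded \<Omega>"
    and dim: "p = 1 \<Longrightarrow> T = norm (x2 - x1) \<Longrightarrow> DIM('a) = 1"
  shows "crosses_level (tau p x1 x2) (x2 - x1) \<Omega> T"
proof -
  obtain R where R: "\<And>y. y \<in> \<Omega> \<Longrightarrow> norm y \<le> R" using assms(3) by (auto simp: bounded_iff)
  define D where "D = norm (x2 - x1)"
  have bounds: "- D \<le> tau 1 x1 x2 z" "tau 1 x1 x2 z \<le> D" for z
    using tau_p1_bounds[of x1 x2 z] by (auto simp: D_def)
  consider "p > 1" | "p = 1" "T \<le> - D" | "p = 1" "- D < T" "T < D" | "p = 1" "T = D" | "p = 1" "D < T"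
    using assms(2) by linarith
  then show ?thesis
  proof cases
    case 1
    then show ?thesis by (intro tau_crosses_level_of_slope_pos[OF assms(1,2) zero_less_one R]) auto
  next
    case 2
    show ?thesis unfolding 2(1)
      using order.trans[OF 2(2) bounds(1)] by (intro crosses_level_vacuous[of 1]) auto
  next
    case 3
    define \<epsilon> where "\<epsilon> = min 1 ((T + D) / 2)"
    have "\<epsilon> > 0" using 3 by (simp add: \<epsilon>_def)
    have "\<epsilon> \<le> (T + D) / 2" unfolding \<epsilon>_def by (rule min.cobounded2)
    then have "- D < T - \<epsilon>" using 3 by (simp add: field_simps)
    have ends: "tau 1 x1 x2 x1 = - D" "tau 1 x1 x2 x2 = D"
      by (simp_all add: tau_p1 D_def norm_minus_commute)
    show ?thesis
    proof (rule tau_crosses_level_of_slope_pos[OF assms(1,2) \<open>\<epsilon> > 0\<close> R])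
      fix z assume "T - \<epsilon> \<le> tau p x1 x2 z" "tau p x1 x2 z \<le> T"
      then have "- D < tau 1 x1 x2 z" "tau 1 x1 x2 z < D" using 3 \<open>- D < T - \<epsilon>\<close> by auto
      then show "p > 1 \<or> (p = 1 \<and> z \<noteq> x1 \<and> z \<noteq> x2 \<and> \<bar>tau 1 x1 x2 z\<bar> \<noteq> norm (x2 - x1))"
        using 3(1) ends by (auto simp: D_def)
    qed
  next
    case 4
    then show ?thesis using tau_crosses_level_dim1[OF dim assms(1)] by (simp add: D_def)
  next
    case 5
    show ?thesis unfolding 5(1)
    proof (rule crosses_level_vacuous[of "(T - D) / 2"])
      fix y assume "T - (T - D) / 2 \<le> tau 1 x1 x2 y"
      then show "T \<le> tau 1 x1 x2 y" using bounds(2)[of y] 5(2) by (simp add: field_simps)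
    qed (use 5 in simp)
  qed
qed

section \<open>The cumulative mass \<open>mfun\<close>\<close>

lemma tau_preimage_in_sets:
  assumes "0 < p" "\<Omega> \<in> sets lebesgue" "B \<in> sets borel"
  shows "{x \<in> \<Omega>. tau p x1 x2 x \<in> B} \<in> sets lebesgue"
proof -
  have "tau p x1 x2 -` B \<in> sets borel"
    using measurable_sets_borel[OF borel_measurable_tau[OF assms(1), of x1 x2] assms(3)] by simp
  then have "\<Omega> \<inter> tau p x1 x2 -` B \<in> sets lebesgue" using assms(2) by auto
  then show ?thesis by (simp add: Int_def)
qed

lemma integrable_on_tau_preimage:
  fixes f :: "'a::euclidean_space \<Rightarrow> real"
  assumes "f absolutely_integrable_on \<Omega>" "\<Omega> \<in> sets lebesgue" "0 < p" "B \<in> sets borel"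
  shows "f integrable_on {x \<in> \<Omega>. tau p x1 x2 x \<in> B}"
proof -
  have "f absolutely_integrable_on {x \<in> \<Omega>. tau p x1 x2 x \<in> B}"
    by (rule set_integrable_subset[OF assms(1) tau_preimage_in_sets[OF assms(3,2,4)]]) auto
  then show ?thesis by (simp add: absolutely_integrable_on_def)
qed

context
  fixes \<Omega> :: "'a::euclidean_space set" and f :: "'a \<Rightarrow> real" and p :: real and x1 x2 :: 'a
  assumes f: "f absolutely_integrable_on \<Omega>" and \<Omega>: "\<Omega> \<in> sets lebesgue" and p: "0 < p"
begin

lemma integrable_on_tau_sublevel: "f integrable_on {x \<in> \<Omega>. tau p x1 x2 x < t}"
  using integrable_on_tau_preimage[OF f \<Omega> p, of "{..<t}"] by simp

lemma mfun_diff: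
  assumes "t \<le> T"
  shows "mfun \<Omega> f p x1 x2 T - mfun \<Omega> f p x1 x2 t = integral {x \<in> \<Omega>. t \<le> tau p x1 x2 x \<and> tau p x1 x2 x < T} f"
proof -
  let ?S = "{x \<in> \<Omega>. t \<le> tau p x1 x2 x \<and> tau p x1 x2 x < T}"
  have "{x \<in> \<Omega>. tau p x1 x2 x < T} = {x \<in> \<Omega>. tau p x1 x2 x < t} \<union> ?S"
    using assms by auto
  moreover have "integral ({x \<in> \<Omega>. tau p x1 x2 x < t} \<union> ?S) f
                  = integral {x \<in> \<Omega>. tau p x1 x2 x < t} f + integral ?S f"
    using integrable_on_tau_preimage[OF f \<Omega> p, of "{t..<T}"]
    by (intro integral_Un integrable_on_tau_sublevel) (auto intro: negligible_subset[OF negligible_empty])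
  ultimately show ?thesis unfolding mfun_def by simp
qed

lemma mfun_mono:
  assumes "\<forall>x\<in>\<Omega>. 0 \<le> f x" "t \<le> T"
  shows "mfun \<Omega> f p x1 x2 t \<le> mfun \<Omega> f p x1 x2 T"
proof -
  have "0 \<le> integral {x \<in> \<Omega>. t \<le> tau p x1 x2 x \<and> tau p x1 x2 x < T} f"
    using integrable_on_tau_preimage[OF f \<Omega> p, of "{t..<T}"] assms(1)
    by (intro integral_nonneg) auto
  then show ?thesis using mfun_diff[OF assms(2)] by simp
qed

lemma mfun_bounds:
  assumes "\<forall>x\<in>\<Omega>. 0 \<le> f x" "(f has_integral 1) \<Omega>"
  shows "0 \<le> mfun \<Omega> f p x1 x2 t" "mfun \<Omega> f p x1 x2 t \<le> 1"
proof -
  show "0 \<le> mfun \<Omega> f p x1 x2 t"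
    unfolding mfun_def using integrable_on_tau_sublevel assms(1) by (intro integral_nonneg) auto
  have "mfun \<Omega> f p x1 x2 t \<le> integral \<Omega> f"
    unfolding mfun_def using integrable_on_tau_sublevel assms by (intro integral_subset_le) auto
  then show "mfun \<Omega> f p x1 x2 t \<le> 1" using assms(2) by (simp add: integral_unique)
qed

end

lemma mfun_eq_one_at_top:
  fixes x1 x2 :: "'a::euclidean_space"
  assumes "DIM('a) \<noteq> 1" "x1 \<noteq> x2" "(f has_integral 1) \<Omega>"
  shows "mfun \<Omega> f 1 x1 x2 (norm (x2 - x1)) = 1"
proof -
  define u where "u = x2 - x1"
  have ray: "{x. tau 1 x1 x2 x = norm u} \<subseteq> (+) x2 ` span {u}"
  proof
    fix x assume "x \<in> {x. tau 1 x1 x2 x = norm u}"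
    then have "norm ((x - x2) + u) = norm (x - x2) + norm u" by (simp add: tau_p1 u_def)
    then have parallel: "norm u *\<^sub>R (x - x2) = norm (x - x2) *\<^sub>R u" by (simp add: norm_triangle_eq)
    have "norm u \<noteq> 0" using assms(2) by (simp add: u_def)
    then have "x - x2 = inverse (norm u) *\<^sub>R (norm u *\<^sub>R (x - x2))" by simp
    also have "\<dots> = (inverse (norm u) * norm (x - x2)) *\<^sub>R u" unfolding parallel by simp
    finally have "x - x2 = (inverse (norm u) * norm (x - x2)) *\<^sub>R u" .
    then have "x - x2 \<in> span {u}" unfolding span_singleton by blast
    then show "x \<in> (+) x2 ` span {u}" by (rule rev_image_eqI) simp
  qed
  have "1 < DIM('a)" using assms(1) DIM_positive[where 'a='a] by linarith
  then have "dim (span {u}) < DIM('a)" using assms(2) by (simp add: u_def dim_span)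
  then have "negligible {x. tau 1 x1 x2 x = norm u}"
    by (intro negligible_subset[OF negligible_translation ray] negligible_lowdim)
  moreover have "{x \<in> \<Omega>. \<not> tau 1 x1 x2 x < norm u} \<subseteq> {x. tau 1 x1 x2 x = norm u}"
    using tau_p1_bounds[of x1 x2] by (auto simp: u_def abs_le_iff intro: antisym)
  ultimately have "integral {x \<in> \<Omega>. tau 1 x1 x2 x < norm u} f = integral \<Omega> f"
    by (intro integral_spike_set) (auto elim: negligible_subset)
  then show ?thesis using assms(3) by (simp add: mfun_def u_def integral_unique)
qed

lemma integral_le_bound_mult_measure:
  fixes f :: "'a::euclidean_space \<Rightarrow> real"
  assumes "f integrable_on S" "S \<in> lmeasurable" "\<And>x. x \<in> S \<Longrightarrow> f x \<le> B"
  shows "integral S f \<le> B * measure lebesgue S"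
proof -
  have "integral S f \<le> integral S (\<lambda>x. B)"
    using assms by (intro integral_le integrable_on_const) auto
  also have "\<dots> = B * measure lebesgue S"
    using lmeasure_integral[OF assms(2)] integral_cmul[of S B "\<lambda>x. 1::real"] by simp
  finally show ?thesis .
qed

lemma mfun_left_lipschitz:
  fixes \<Omega> :: "'a::euclidean_space set" and f :: "'a \<Rightarrow> real"
  assumes p: "p \<ge> 1" and \<Omega>: "bounded \<Omega>" "\<Omega> \<in> sets lebesgue"
    and f: "f absolutely_integrable_on \<Omega>" "\<forall>x\<in>\<Omega>. 0 \<le> f x" "\<forall>x\<in>\<Omega>. f x \<le> B" "(f has_integral 1) \<Omega>"
    and less: "mfun \<Omega> f p x1 x2 T < 1"
  shows "\<exists>\<Lambda>\<ge>0. \<forall>t<T. mfun \<Omega> f p x1 x2 T - mfun \<Omega> f p x1 x2 t \<le> \<Lambda> * (T - t)"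
proof (cases "x1 = x2")
  case True
  then have "mfun \<Omega> f p x1 x2 t = (if 0 < t then 1 else 0)" for t
    using f(4) by (simp add: mfun_def tau_def integral_unique)
  then show ?thesis using less by (intro exI[of _ 0]) auto
next
  case False
  have p0: "0 < p" using p by simp
  have "crosses_level (tau p x1 x2) (x2 - x1) \<Omega> T"
  proof (rule tau_crosses_level[OF False p \<Omega>(1)])
    assume "p = 1" "T = norm (x2 - x1)"
    then show "DIM('a) = 1" using mfun_eq_one_at_top[OF _ False f(4)] less by fastforce
  qed
  then obtain C \<eta> where \<eta>: "\<eta> > 0" and slab: "\<And>s. T - \<eta> \<le> s \<Longrightarrow> s < T \<Longrightarrow>
      measure lebesgue {x\<in>\<Omega>. s \<le> tau p x1 x2 x \<and> tau p x1 x2 x < T} \<le> C * (T - s)"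
    using slab_measure_le_of_crosses_level[OF _ tau_line_mono[OF p] borel_measurable_tau[OF p0] \<Omega>]
    by blast
  define B' where "B' = max B 0"
  define \<Lambda> where "\<Lambda> = max (B' * C) (1 / \<eta>)"
  have "mfun \<Omega> f p x1 x2 T - mfun \<Omega> f p x1 x2 t \<le> \<Lambda> * (T - t)" if "t < T" for t
  proof (cases "T - \<eta> \<le> t")
    case True
    define S where "S = {x\<in>\<Omega>. t \<le> tau p x1 x2 x \<and> tau p x1 x2 x < T}"
    have "S \<in> sets lebesgue"
      using tau_preimage_in_sets[OF p0 \<Omega>(2), of "{t..<T}"] by (simp add: S_def)
    then have S: "S \<in> lmeasurable"
      by (intro bounded_set_imp_lmeasurable bounded_subset[OF \<Omega>(1)]) (auto simp: S_def)
    have "mfun \<Omega> f p x1 x2 T - mfun \<Omega> f p x1 x2 t = integral S f"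
      using mfun_diff[OF f(1) \<Omega>(2) p0] that by (simp add: S_def)
    also have "\<dots> \<le> B' * measure lebesgue S"
      using integrable_on_tau_preimage[OF f(1) \<Omega>(2) p0, of "{t..<T}"] f(3)
      by (intro integral_le_bound_mult_measure S) (auto simp: S_def B'_def)
    also have "\<dots> \<le> B' * (C * (T - t))"
      using slab[OF True that] by (intro mult_left_mono) (auto simp: S_def B'_def)
    also have "\<dots> \<le> \<Lambda> * (T - t)"
      using that by (simp add: \<Lambda>_def mult.assoc[symmetric] mult_right_mono)
    finally show ?thesis .
  next
    case False
    have "mfun \<Omega> f p x1 x2 T - mfun \<Omega> f p x1 x2 t \<le> 1"
      using mfun_bounds[OF f(1) \<Omega>(2) p0 f(2,4)] by (smt (verit))
    also have "1 \<le> 1 / \<eta> * (T - t)" using False \<eta> by (simp add: field_simps)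
    also have "\<dots> \<le> \<Lambda> * (T - t)" using that by (intro mult_right_mono) (auto simp: \<Lambda>_def)
    finally show ?thesis .
  qed
  moreover have "\<Lambda> \<ge> 0" using \<eta> by (simp add: \<Lambda>_def le_max_iff_disj)
  ultimately show ?thesis by blast
qed

section \<open>The iteration\<close>

lemma absolutely_integrable_bounded_borel_mult:
  fixes f g :: "'a::euclidean_space \<Rightarrow> real"
  assumes "f absolutely_integrable_on \<Omega>" "\<Omega> \<in> sets lebesgue" "g \<in> borel_measurable borel"
    and "\<And>x. x \<in> \<Omega> \<Longrightarrow> \<bar>g x\<bar> \<le> C"
  shows "(\<lambda>x. g x * f x) absolutely_integrable_on \<Omega>"
proof (rule absolutely_integrable_bounded_measurable_product[OF bilinear_times _ assms(2) _ assms(1)])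
  show "g \<in> borel_measurable (lebesgue_on \<Omega>)"
    using assms(3) by (intro measurable_restrict_space1) (simp add: measurable_completion)
  show "bounded (g ` \<Omega>)" using assms(4) by (auto simp: bounded_iff)
qed

definition mass :: "'a::euclidean_space set \<Rightarrow> ('a \<Rightarrow> real) \<Rightarrow> ('a \<Rightarrow> real) \<Rightarrow> real" where
  "mass \<Omega> f \<psi> = integral \<Omega> (\<lambda>x. (1 - \<psi> x) * f x)"

definition response :: "(real \<Rightarrow> real) \<Rightarrow> (real \<Rightarrow> real) \<Rightarrow> real \<Rightarrow> real" where
  "response h1 h2 m = h2 (1 - m) - h1 m"

lemma Gfun_eq_response: "Gfun \<Omega> f p x1 x2 h1 h2 t = response h1 h2 (mfun \<Omega> f p x1 x2 t)"
  by (simp add: Gfun_def response_def)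

lemma psi_seq_Suc_apply:
  "psi_seq \<Omega> f p x1 x2 h1 h2 \<rho> \<psi>0 (Suc j) x =
     (let \<psi> = psi_seq \<Omega> f p x1 x2 h1 h2 \<rho> \<psi>0 j in
      if tau p x1 x2 x < response h1 h2 (mass \<Omega> f \<psi>) then \<rho> * \<psi> x else 1 - \<rho> * (1 - \<psi> x))"
  by (simp add: Let_def mass_def response_def)

lemma response_antimono_lipschitz:
  assumes "mono_on {0..1} h1" "mono_on {0..1} h2" "L1-lipschitz_on {0..1} h1" "L2-lipschitz_on {0..1} h2"
  shows "antimono_on {0..1} (response h1 h2)" "(L1 + L2)-lipschitz_on {0..1} (response h1 h2)"
proof -
  show "antimono_on {0..1} (response h1 h2)"
    using assms(1,2) by (auto simp: monotone_on_def response_def intro!: diff_mono)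
  show "(L1 + L2)-lipschitz_on {0..1} (response h1 h2)"
  proof (rule lipschitz_onI)
    fix a b :: real assume ab: "a \<in> {0..1}" "b \<in> {0..1}"
    have "\<bar>h2 (1 - a) - h2 (1 - b)\<bar> \<le> L2 * \<bar>a - b\<bar>"
      using lipschitz_onD[OF assms(4), of "1 - a" "1 - b"] ab by (simp add: dist_real_def abs_minus_commute)
    moreover have "\<bar>h1 a - h1 b\<bar> \<le> L1 * \<bar>a - b\<bar>"
      using lipschitz_onD[OF assms(3) ab] by (simp add: dist_real_def)
    moreover have "\<bar>response h1 h2 a - response h1 h2 b\<bar> \<le> \<bar>h2 (1 - a) - h2 (1 - b)\<bar> + \<bar>h1 a - h1 b\<bar>"
      using abs_triangle_ineq4[of "h2 (1 - a) - h2 (1 - b)" "h1 a - h1 b"]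
      by (simp add: response_def algebra_simps)
    ultimately show "dist (response h1 h2 a) (response h1 h2 b) \<le> (L1 + L2) * dist a b"
      by (simp add: dist_real_def distrib_right)
  next
    show "0 \<le> L1 + L2" using assms(3,4) by (simp add: lipschitz_on_nonneg)
  qed
qed

context
  fixes \<Omega> :: "'a::euclidean_space set" and f :: "'a \<Rightarrow> real" and p :: real and x1 x2 :: 'a
  assumes f: "f absolutely_integrable_on \<Omega>" "\<forall>x\<in>\<Omega>. 0 \<le> f x" "(f has_integral 1) \<Omega>"
    and \<Omega>: "\<Omega> \<in> sets lebesgue" and p: "0 < p"
begin

lemma mass_bounds:
  assumes "\<psi> \<in> borel_measurable borel" "\<And>x. x \<in> \<Omega> \<Longrightarrow> \<psi> x \<in> {0..1}"
  shows "mass \<Omega> f \<psi> \<in> {0..1}"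
proof -
  have "(\<lambda>x. (1 - \<psi> x) * f x) integrable_on \<Omega>"
    using absolutely_integrable_bounded_borel_mult[OF f(1) \<Omega>, of "\<lambda>x. 1 - \<psi> x" 1] assms
    by (auto simp: absolutely_integrable_on_def)
  moreover have "0 \<le> (1 - \<psi> x) * f x" "(1 - \<psi> x) * f x \<le> f x" if "x \<in> \<Omega>" for x
    using assms(2)[OF that] f(2) that by (auto intro: mult_left_le_one_le)
  ultimately show ?thesis
    using f(3) integral_le[of _ \<Omega> f] integral_nonneg[of _ \<Omega>]
    by (fastforce simp: mass_def integral_unique)
qed

lemma mass_threshold_step:
  assumes "\<psi> \<in> borel_measurable borel" "\<And>x. x \<in> \<Omega> \<Longrightarrow> \<psi> x \<in> {0..1}"
  shows "mass \<Omega> f (\<lambda>x. if tau p x1 x2 x < t then \<rho> * \<psi> x else 1 - \<rho> * (1 - \<psi> x))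
           = \<rho> * mass \<Omega> f \<psi> + (1 - \<rho>) * mfun \<Omega> f p x1 x2 t"
proof -
  define g where "g x = (if x \<in> {x. tau p x1 x2 x < t} then f x else 0)" for x
  have step: "(1 - (if tau p x1 x2 x < t then \<rho> * \<psi> x else 1 - \<rho> * (1 - \<psi> x))) * f x
      = \<rho> * ((1 - \<psi> x) * f x) + (1 - \<rho>) * g x" for x
    by (simp add: g_def algebra_simps)
  have A: "(\<lambda>x. (1 - \<psi> x) * f x) integrable_on \<Omega>"
    using absolutely_integrable_bounded_borel_mult[OF f(1) \<Omega>, of "\<lambda>x. 1 - \<psi> x" 1] assms
    by (auto simp: absolutely_integrable_on_def)
  have B: "g integrable_on \<Omega>"
    unfolding g_def[abs_def] integrable_restrict_Int
    using integrable_on_tau_sublevel[OF f(1) \<Omega> p, of x1 x2 t] by (simp add: Int_def conj_commute)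
  have "integral \<Omega> g = mfun \<Omega> f p x1 x2 t"
    unfolding g_def[abs_def] integral_restrict_Int by (simp add: mfun_def Int_def conj_commute)
  moreover have "integral \<Omega> (\<lambda>x. \<rho> * ((1 - \<psi> x) * f x) + (1 - \<rho>) * g x)
      = \<rho> * integral \<Omega> (\<lambda>x. (1 - \<psi> x) * f x) + (1 - \<rho>) * integral \<Omega> g"
    using integral_add[OF integrable_on_cmult_left[OF A, of \<rho>, simplified]
        integrable_on_cmult_left[OF B, of "1 - \<rho>", simplified]]
    by (simp only: integral_mult[OF A] integral_mult[OF B])
  ultimately show ?thesis unfolding mass_def step by simp
qed

end

lemma psi_seq_borel_range:
  assumes "\<psi>0 \<in> borel_measurable borel" "\<forall>x\<in>\<Omega>. \<psi>0 x \<in> {0..1}" "0 \<le> \<rho>" "\<rho> \<le> 1" "0 < p"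
  shows "psi_seq \<Omega> f p x1 x2 h1 h2 \<rho> \<psi>0 j \<in> borel_measurable borel \<and>
         (\<forall>x\<in>\<Omega>. psi_seq \<Omega> f p x1 x2 h1 h2 \<rho> \<psi>0 j x \<in> {0..1})"
proof (induction j)
  case (Suc j)
  let ?\<psi> = "psi_seq \<Omega> f p x1 x2 h1 h2 \<rho> \<psi>0 j"
  have "{x \<in> space borel. tau p x1 x2 x < response h1 h2 (mass \<Omega> f ?\<psi>)} \<in> sets borel"
    using borel_measurable_tau[OF assms(5)] by measurable
  then have "psi_seq \<Omega> f p x1 x2 h1 h2 \<rho> \<psi>0 (Suc j) \<in> borel_measurable borel"
    using Suc unfolding psi_seq_Suc_apply[abs_def] Let_def by (intro measurable_If) auto
  moreover have "\<rho> * ?\<psi> x \<in> {0..1}" "1 - \<rho> * (1 - ?\<psi> x) \<in> {0..1}" if "x \<in> \<Omega>" for x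
    using Suc that assms(3,4) by (auto intro: mult_le_one mult_nonneg_nonneg)
  ultimately show ?case by (simp add: psi_seq_Suc_apply Let_def)
qed (use assms in simp)

lemma psi_seq_uniform_limit:
  fixes \<Omega> :: "'a::euclidean_space set" and f :: "'a \<Rightarrow> real"
  assumes f: "f absolutely_integrable_on \<Omega>" "\<forall>x\<in>\<Omega>. 0 \<le> f x" "(f has_integral 1) \<Omega>"
    and \<Omega>: "\<Omega> \<in> sets lebesgue" and p: "0 < p"
    and H: "antimono_on {0..1} (response h1 h2)" "L-lipschitz_on {0..1} (response h1 h2)"
    and fixpoint: "response h1 h2 (mfun \<Omega> f p x1 x2 T) = T"
    and left: "mfun \<Omega> f p x1 x2 T < 1 \<Longrightarrow>
                 \<forall>t<T. mfun \<Omega> f p x1 x2 T - mfun \<Omega> f p x1 x2 t \<le> \<Lambda> * (T - t)" "0 \<le> \<Lambda>"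
    and \<rho>: "0 < \<rho>" "\<rho> < 1" "(1 - \<rho>) * (\<Lambda> * L) \<le> \<rho>"
    and \<psi>0: "\<psi>0 \<in> borel_measurable borel" "\<forall>x\<in>\<Omega>. \<psi>0 x \<in> {0..1}"
    and K: "compact K" "K \<subseteq> \<Omega> - {x. tau p x1 x2 x = T}"
  shows "uniform_limit K (psi_seq \<Omega> f p x1 x2 h1 h2 \<rho> \<psi>0) (\<lambda>x. if tau p x1 x2 x < T then 0 else 1)
           sequentially"
proof -
  let ?\<psi> = "psi_seq \<Omega> f p x1 x2 h1 h2 \<rho> \<psi>0"
  define m where "m j = mass \<Omega> f (?\<psi> j)" for j
  have \<psi>: "?\<psi> j \<in> borel_measurable borel" "\<And>x. x \<in> \<Omega> \<Longrightarrow> ?\<psi> j x \<in> {0..1}" for j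
    using psi_seq_borel_range[OF \<psi>0 _ _ p, of \<rho>] \<rho> by auto
  have thresholds: "(\<lambda>j. response h1 h2 (m j)) \<longlonglongrightarrow> T"
  proof (rule relaxation_feedback_tendsto(2)[OF _ _ _ _ H fixpoint left \<rho>])
    show "m (Suc j) = \<rho> * m j + (1 - \<rho>) * mfun \<Omega> f p x1 x2 (response h1 h2 (m j))" for j
      unfolding m_def psi_seq_Suc_apply[abs_def] Let_def by (rule mass_threshold_step[OF f \<Omega> p \<psi>])
    show "m j \<in> {0..1}" for j using mass_bounds[OF f \<Omega> p \<psi>] by (simp add: m_def)
    show "mono (mfun \<Omega> f p x1 x2)" using mfun_mono[OF f(1) \<Omega> p f(2)] by (rule monoI)
    show "mfun \<Omega> f p x1 x2 T \<in> {0..1}" using mfun_bounds[OF f(1) \<Omega> p f(2,3)] by simp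
  qed
  show ?thesis
  proof (rule threshold_iteration_uniform_limit[OF _ _ _ _ thresholds])
    show "?\<psi> (Suc j) x = (if tau p x1 x2 x < response h1 h2 (m j) then \<rho> * ?\<psi> j x else 1 - \<rho> * (1 - ?\<psi> j x))"
      for j x unfolding m_def psi_seq_Suc_apply Let_def ..
    show "?\<psi> j x \<in> {0..1}" if "x \<in> K" for j x using \<psi>(2) that K(2) by blast
    show "continuous_on K (tau p x1 x2)" using p by (rule continuous_on_tau)
  qed (use \<rho> K in auto)
qed

theorem theorem5p5:
  fixes \<Omega> :: "'a::euclidean_space set"
    and f :: "'a \<Rightarrow> real" and p :: real and x1 x2 :: 'a
    and h1 h2 :: "real \<Rightarrow> real"
  assumes \<Omega>_borel: "\<Omega> \<in> sets borel" and \<Omega>_bdd: "bounded \<Omega>"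
    and f_nonneg: "\<forall>x\<in>\<Omega>. f x \<ge> 0"
    and f_bdd: "\<exists>B. \<forall>x\<in>\<Omega>. f x \<le> B"
    and f_int: "(f has_integral 1) \<Omega>"
    and p_ge: "p \<ge> 1"
    and x1: "x1 \<in> \<Omega>" and x2: "x2 \<in> \<Omega>"
    and h1_mono: "mono_on {0..1} h1" and h2_mono: "mono_on {0..1} h2"
    and h1_nonneg: "\<forall>s\<in>{0..1}. h1 s \<ge> 0" and h2_nonneg: "\<forall>s\<in>{0..1}. h2 s \<ge> 0"
    and h1_lip: "\<exists>L. L-lipschitz_on {0..1} h1"
    and h2_lip: "\<exists>L. L-lipschitz_on {0..1} h2"
    and fixpt: "\<exists>!t. Gfun \<Omega> f p x1 x2 h1 h2 t = t"
  shows "\<exists>\<rho>bar \<in> {0<..<1}. \<forall>\<rho> \<in> {\<rho>bar<..<1}. \<forall>\<psi>0.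
           \<psi>0 \<in> borel_measurable borel \<and> (\<forall>x\<in>\<Omega>. \<psi>0 x \<in> {0..1}) \<longrightarrow>
           (\<forall>K. compact K \<and> K \<subseteq> \<Omega> - {x. tau p x1 x2 x = tbar \<Omega> f p x1 x2 h1 h2} \<longrightarrow>
              uniform_limit K (psi_seq \<Omega> f p x1 x2 h1 h2 \<rho> \<psi>0)
                (psibar \<Omega> f p x1 x2 h1 h2) sequentially)"
proof -
  have \<Omega>: "\<Omega> \<in> sets lebesgue" using \<Omega>_borel by simp
  have f_abs: "f absolutely_integrable_on \<Omega>"
    using f_int f_nonneg by (intro nonnegative_absolutely_integrable_1) blast+
  have p: "0 < p" using p_ge by simp
  obtain B where B: "\<forall>x\<in>\<Omega>. f x \<le> B" using f_bdd by blast
  obtain L1 L2 where "L1-lipschitz_on {0..1} h1" "L2-lipschitz_on {0..1} h2" using h1_lip h2_lip by blast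
  note H = response_antimono_lipschitz[OF h1_mono h2_mono this]
  define T where "T = tbar \<Omega> f p x1 x2 h1 h2"
  have fixpoint: "response h1 h2 (mfun \<Omega> f p x1 x2 T) = T"
    using theI'[OF fixpt] by (simp add: T_def tbar_def Gfun_eq_response)
  obtain \<Lambda> where \<Lambda>: "mfun \<Omega> f p x1 x2 T < 1 \<Longrightarrow>
      \<forall>t<T. mfun \<Omega> f p x1 x2 T - mfun \<Omega> f p x1 x2 t \<le> \<Lambda> * (T - t)" "0 \<le> \<Lambda>"
  proof (cases "mfun \<Omega> f p x1 x2 T < 1")
    case True
    then show ?thesis using that mfun_left_lipschitz[OF p_ge \<Omega>_bdd \<Omega> f_abs f_nonneg B f_int] by blast
  qed (use that[of 0] in simp)
  have "0 \<le> \<Lambda> * (L1 + L2)" using \<Lambda>(2) H(2) by (simp add: lipschitz_on_nonneg)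
  from exists_relaxation_threshold[OF this] obtain \<rho>bar where \<rho>bar: "\<rho>bar \<in> {0<..<1}"
    "\<And>\<rho>. \<rho> \<in> {\<rho>bar<..<1} \<Longrightarrow> (1 - \<rho>) * (\<Lambda> * (L1 + L2)) \<le> \<rho>"
    by blast
  show ?thesis
  proof (rule bexI[OF _ \<rho>bar(1)], intro ballI allI impI)
    fix \<rho> :: real and \<psi>0 :: "'a \<Rightarrow> real" and K :: "'a set"
    assume "\<rho> \<in> {\<rho>bar<..<1}" "\<psi>0 \<in> borel_measurable borel \<and> (\<forall>x\<in>\<Omega>. \<psi>0 x \<in> {0..1})"
      "compact K \<and> K \<subseteq> \<Omega> - {x. tau p x1 x2 x = tbar \<Omega> f p x1 x2 h1 h2}"
    then show "uniform_limit K (psi_seq \<Omega> f p x1 x2 h1 h2 \<rho> \<psi>0) (psibar \<Omega> f p x1 x2 h1 h2) sequentially"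
      unfolding psibar_def[abs_def] T_def[symmetric]
      using \<rho>bar(1) \<rho>bar(2)[of \<rho>]
      by (intro psi_seq_uniform_limit[OF f_abs f_nonneg f_int \<Omega> p H fixpoint \<Lambda>]) auto
  qed
qed

end
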